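(* Let $\mathcal B$ be a symmetric bilinear form on a vector space $A$ and $s\in A$ a fixed vector. Define $\circ:A\otimes A\to A$ by $x\circ y=\mathcal B(x,y)s-\mathcal B(x,s)y$. Then $(A,\circ)$ is an anti-pre-Lie algebra. Moreover, $\mathcal B$ is invariant on $(A,\circ)$, i.e. $\mathcal B(x\circ y,z)=\mathcal B(y,[x,z])$ for all $x,y,z\in A$ where $[x,z]=x\circ z-z\circ x$, and hence $\mathcal B$ is a commutative 2-cocycle on the Lie algebra $(A,[-,-])$.
   Context: All vector spaces are finite-dimensional over a field $\mathbb F$ of characteristic $0$. An anti-pre-Lie algebra is a vector space $A$ with a bilinear operation $\circ$ such that, writing $[x,y]=x\circ y-y\circ x$, for all $x,y,z\in A$: (i) $x\circ(y\circ z)-y\circ(x\circ z)=[y,x]\circ z$, and (ii) $[x,y]\circ z+[y,z]\circ x+[z,x]\circ y=0$. A commutative 2-cocycle on a Lie algebra is a symmetric bilinear form $\mathcal B$ with $\mathcal B([x,y],z)+\mathcal B([y,z],x)+\mathcal B([z,x],y)=0$. *)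

theory Defs
  imports Main "HOL.Vector_Spaces"
begin

definition fin_dim_vs :: "('a::field_char_0 \<Rightarrow> 'v::ab_group_add \<Rightarrow> 'v) \<Rightarrow> bool" where
  "fin_dim_vs scale \<longleftrightarrow> (\<exists>Bs::'v set. finite_dimensional_vector_space scale Bs)"

definition bilinear_map ::
  "('a::field \<Rightarrow> 'u::ab_group_add \<Rightarrow> 'u) \<Rightarrow> ('a \<Rightarrow> 'v::ab_group_add \<Rightarrow> 'v)
   \<Rightarrow> ('a \<Rightarrow> 'w::ab_group_add \<Rightarrow> 'w) \<Rightarrow> ('u \<Rightarrow> 'v \<Rightarrow> 'w) \<Rightarrow> bool" where
  "bilinear_map s1 s2 s3 f \<longleftrightarrow>
     (\<forall>x. Vector_Spaces.linear s2 s3 (f x)) \<and> (\<forall>y. Vector_Spaces.linear s1 s3 (\<lambda>x. f x y))"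

definition bilinear_form ::
  "('a::field \<Rightarrow> 'v::ab_group_add \<Rightarrow> 'v) \<Rightarrow> ('v \<Rightarrow> 'v \<Rightarrow> 'a) \<Rightarrow> bool" where
  "bilinear_form scale B \<longleftrightarrow> bilinear_map scale scale (*) B"

definition symmetric_form :: "('v \<Rightarrow> 'v \<Rightarrow> 'a) \<Rightarrow> bool" where
  "symmetric_form B \<longleftrightarrow> (\<forall>x y. B x y = B y x)"

definition commutator :: "('v \<Rightarrow> 'v \<Rightarrow> 'v::ab_group_add) \<Rightarrow> 'v \<Rightarrow> 'v \<Rightarrow> 'v" where
  "commutator m x y = m x y - m y x"

definition anti_pre_Lie ::
  "('a::field \<Rightarrow> 'v::ab_group_add \<Rightarrow> 'v) \<Rightarrow> ('v \<Rightarrow> 'v \<Rightarrow> 'v) \<Rightarrow> bool" where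
  "anti_pre_Lie scale m \<longleftrightarrow> bilinear_map scale scale scale m \<and>
     (\<forall>x y z. m x (m y z) - m y (m x z) = m (commutator m y x) z) \<and>
     (\<forall>x y z. m (commutator m x y) z + m (commutator m y z) x + m (commutator m z x) y = 0)"

definition invariant_form ::
  "('v \<Rightarrow> 'v \<Rightarrow> 'a) \<Rightarrow> ('v \<Rightarrow> 'v \<Rightarrow> 'v::ab_group_add) \<Rightarrow> bool" where
  "invariant_form B m \<longleftrightarrow> (\<forall>x y z. B (m x y) z = B y (commutator m x z))"

definition commutative_2_cocycle ::
  "('a::field \<Rightarrow> 'v::ab_group_add \<Rightarrow> 'v) \<Rightarrow> ('v \<Rightarrow> 'v \<Rightarrow> 'a) \<Rightarrow> ('v \<Rightarrow> 'v \<Rightarrow> 'v) \<Rightarrow> bool" where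
  "commutative_2_cocycle scale B br \<longleftrightarrow> bilinear_form scale B \<and> symmetric_form B \<and>
     (\<forall>x y z. B (br x y) z + B (br y z) x + B (br z x) y = 0)"

end

theory Submission
  imports Defs
begin

text \<open>The commutator of \<open>x \<circ> y = B(x,y) s - B(x,s) y\<close> is
  \<open>[x,y] = B(y,s) x - B(x,s) y\<close>, which is \<open>B\<close>-orthogonal to \<open>s\<close>; hence
  \<open>[x,y] \<circ> z = B([x,y],z) s\<close>. Invariance of \<open>B\<close> is a direct expansion, and for any
  symmetric invariant form \<open>B([x,y],z) = B(y,[x,z]) - B(x,[y,z])\<close> rearranges into the
  cocycle identity. Multiplied by \<open>s\<close>, the cocycle identity is the second anti-pre-Lie
  identity; the first one reduces to comparing coefficients of \<open>s\<close> and \<open>z\<close>.\<close>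

lemma commutative_2_cocycle_if_invariant:
  fixes scale :: "'a::field \<Rightarrow> 'v::ab_group_add \<Rightarrow> 'v"
  assumes bilinear: "bilinear_form scale B" and symmetric: "symmetric_form B"
    and invariant: "invariant_form B m"
  shows "commutative_2_cocycle scale B (commutator m)"
proof -
  have sym: "B x y = B y x" for x y
    using symmetric by (simp add: symmetric_form_def)
  have "Vector_Spaces.linear scale (*) (\<lambda>x. B x y)" for y
    using bilinear by (simp add: bilinear_form_def bilinear_map_def)
  then have add_left: "B (x + x') y = B x y + B x' y" for x x' y
    by (simp add: linear_iff)
  have diff_left: "B (x - x') y = B x y - B x' y" for x x' y
    using add_left[of "x - x'" x' y] by simp
  let ?c = "commutator m"
  have antisym_left: "B (?c x y) z = - B (?c y x) z" for x y z
    using diff_left[of "m y x" "m x y" z] diff_left[of "m x y" "m y x" z]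
    by (simp add: commutator_def)
  have "B (?c x y) z = - B (?c z x) y - B (?c y z) x" for x y z
  proof -
    have "B (?c x y) z = B (m x y) z - B (m y x) z"
      by (simp add: commutator_def diff_left)
    also have "\<dots> = B y (?c x z) - B x (?c y z)"
      using invariant by (simp add: invariant_form_def)
    also have "\<dots> = - B (?c z x) y - B (?c y z) x"
      by (metis sym antisym_left)
    finally show ?thesis .
  qed
  then show ?thesis
    using bilinear symmetric by (simp add: commutative_2_cocycle_def algebra_simps)
qed

locale symmetric_bilinear_space = vector_space scale
  for scale :: "'a::field \<Rightarrow> 'v::ab_group_add \<Rightarrow> 'v" +
  fixes B :: "'v \<Rightarrow> 'v \<Rightarrow> 'a"
  assumes bilinear: "bilinear_form scale B" and symmetric: "symmetric_form B"
begin

lemma form_commute: "B x y = B y x"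
  using symmetric by (simp add: symmetric_form_def)

lemma form_add_right: "B x (y + y') = B x y + B x y'"
  and form_scale_right: "B x (scale c y) = c * B x y"
  using bilinear by (simp_all add: bilinear_form_def bilinear_map_def linear_iff)

lemma form_diff_right: "B x (y - y') = B x y - B x y'"
  using form_add_right[of x "y - y'" y'] by simp

lemma form_add_left: "B (x + x') y = B x y + B x' y"
  and form_scale_left: "B (scale c x) y = c * B x y"
  and form_diff_left: "B (x - x') y = B x y - B x' y"
  by (simp_all add: form_commute[of _ y] form_add_right form_scale_right form_diff_right)

lemmas form_simps = form_add_right form_scale_right form_diff_right
  form_add_left form_scale_left form_diff_left

definition form_product :: "'v \<Rightarrow> 'v \<Rightarrow> 'v \<Rightarrow> 'v" where
  "form_product s x y = scale (B x y) s - scale (B x s) y"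

lemma commutator_form_product:
  "commutator (form_product s) x y = scale (B y s) x - scale (B x s) y"
  by (simp add: commutator_def form_product_def form_commute[of x y])

lemma bilinear_form_product: "bilinear_map scale scale scale (form_product s)"
  unfolding bilinear_map_def linear_iff form_product_def
  by (simp add: vector_space_axioms form_simps scale_right_diff_distrib scale_left_distrib
      scale_left_diff_distrib scale_right_distrib scale_scale algebra_simps)

lemma form_commutator_form_product_orthogonal:
  "B (commutator (form_product s) x y) s = 0"
  by (simp add: commutator_form_product form_simps)

lemma form_product_commutator_left:
  "form_product s (commutator (form_product s) x y) z
     = scale (B (commutator (form_product s) x y) z) s"
  by (simp add: form_product_def form_commutator_form_product_orthogonal)

lemma form_product_nested:
  "form_product s x (form_product s y z) = scale (B x s * B y s) z - scale (B y s * B x z) s"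
  by (simp add: form_product_def form_simps scale_right_diff_distrib scale_scale
      form_commute[of s] algebra_simps)

lemma form_product_invariant:
  "B (form_product s x y) z = B y (commutator (form_product s) x z)"
  by (simp add: commutator_form_product form_product_def form_simps form_commute[of s]
      form_commute[of y x] algebra_simps)

lemma invariant_form_product: "invariant_form B (form_product s)"
  by (simp add: invariant_form_def form_product_invariant)

lemma commutative_2_cocycle_form_product:
  "commutative_2_cocycle scale B (commutator (form_product s))"
  using bilinear symmetric invariant_form_product
  by (rule commutative_2_cocycle_if_invariant)

lemma form_product_left_symmetric:
  "form_product s x (form_product s y z) - form_product s y (form_product s x z)
     = form_product s (commutator (form_product s) y x) z"
  unfolding form_product_commutator_left form_product_nested
  by (simp add: commutator_form_product form_simps scale_left_diff_distrib algebra_simps)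

lemma form_product_cyclic:
  "form_product s (commutator (form_product s) x y) z
     + form_product s (commutator (form_product s) y z) x
     + form_product s (commutator (form_product s) z x) y = 0"
  using commutative_2_cocycle_form_product[of s]
  by (simp add: form_product_commutator_left commutative_2_cocycle_def
      flip: scale_left_distrib)

lemma anti_pre_Lie_form_product: "anti_pre_Lie scale (form_product s)"
  by (simp add: anti_pre_Lie_def bilinear_form_product form_product_left_symmetric
      form_product_cyclic)

end

theorem proposition2p27:
  fixes scale :: "'a::field_char_0 \<Rightarrow> 'v::ab_group_add \<Rightarrow> 'v"
    and B :: "'v \<Rightarrow> 'v \<Rightarrow> 'a" and s :: 'v
  assumes "vector_space scale"
    and "fin_dim_vs scale"
    and "bilinear_form scale B"
    and "symmetric_form B"
  defines "m \<equiv> (\<lambda>x y. scale (B x y) s - scale (B x s) y)"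
  shows "anti_pre_Lie scale m \<and> invariant_form B m \<and>
         commutative_2_cocycle scale B (commutator m)"
proof -
  interpret symmetric_bilinear_space scale B
    using assms(1,3,4)
    by (simp add: symmetric_bilinear_space_def symmetric_bilinear_space_axioms_def)
  have "m = form_product s"
    by (simp add: m_def form_product_def fun_eq_iff)
  then show ?thesis
    using anti_pre_Lie_form_product invariant_form_product commutative_2_cocycle_form_product
    by simp
qed

end
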